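(* Let $\bar B\subset\Sigma_2$ be a proper real trigonal curve. Then the set of non-separating real proper sections (with respect to $\bar B$), regarded as a subset of the affine space $\{(a,b,c)\in\mathbb R^3\}$ of real proper sections $y=ax^2+bx+c$, has exactly two connected components $\mathcal S_+$ and $\mathcal S_-$, each of which is nonempty, open and convex.
   Context: $\Sigma_2$ is the Hirzebruch surface of degree $2$ with exceptional section $E$ ($E^2=-2$), with its standard real structure. Use real affine coordinates $(x,y)$ in which $E$ is $\{y=\infty\}$; near the fiber $x=\infty$ use $u=1/x$, $v=y/x^2$. A proper section is a section disjoint from $E$; a real proper section has the form $y=ax^2+bx+c$ with $a,b,c\in\mathbb R$ (near $x=\infty$: $v=a+bu+cu^2$). A proper trigonal curve is a curve $\bar B\subset\Sigma_2$ disjoint from $E$ given by $y^3+y^2p_2(x)+yp_4(x)+p_6(x)=0$ with $\deg p_d\le d$; it is real if the $p_d$ have real coefficients. For a real proper section $L$, the complement $(\Sigma_2)_{\mathbb R}\setminus(L_{\mathbb R}\cup E_{\mathbb R})$ has two regions (chessboard coloring); $L$ is non-separating with respect to $\bar B$ if $\bar B_{\mathbb R}$ lies entirely in one of these two regions. *)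

theory Defs
  imports "HOL-Analysis.Analysis" "HOL-Computational_Algebra.Polynomial"
begin

text \<open>Real points of the Hirzebruch surface Sigma_2 away from the exceptional
section E.  A point is either in the affine chart (x,y), or on the fiber
x = infinity, where it has coordinates u = 0 and v.\<close>
datatype sigma2_pt = Aff real real | Inf real

text \<open>A proper trigonal curve y^3 + y^2 p2(x) + y p4(x) + p6(x) = 0 with
deg p_d <= d; real since the p_d are real polynomials.\<close>
definition proper_trigonal :: "real poly \<Rightarrow> real poly \<Rightarrow> real poly \<Rightarrow> bool" where
  "proper_trigonal p2 p4 p6 \<longleftrightarrow> degree p2 \<le> 2 \<and> degree p4 \<le> 4 \<and> degree p6 \<le> 6"

text \<open>Near x = infinity (u = 1/x, v = y/x^2) the
equation becomes v^3 + v^2 u^2 p2(1/u) + v u^4 p4(1/u) + u^6 p6(1/u) = 0,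
which at u = 0 reads v^3 + v^2 [x^2]p2 + v [x^4]p4 + [x^6]p6 = 0.\<close>
definition trig_real_pts :: "real poly \<Rightarrow> real poly \<Rightarrow> real poly \<Rightarrow> sigma2_pt set" where
  "trig_real_pts p2 p4 p6 =
     {Aff x y | x y. y^3 + y^2 * poly p2 x + y * poly p4 x + poly p6 x = 0}
   \<union> {Inf v | v. v^3 + v^2 * coeff p2 2 + v * coeff p4 4 + coeff p6 6 = 0}"

text \<open>Signed position of a point relative to the real proper section
L = (a,b,c): y = a x^2 + b x + c (near infinity v = a + b u + c u^2).
The two regions of the complement of L_R \<union> E_R are where this is
positive, resp. negative.\<close>
fun sect_side :: "real \<times> real \<times> real \<Rightarrow> sigma2_pt \<Rightarrow> real" where
  "sect_side (a, b, c) (Aff x y) = y - (a * x^2 + b * x + c)"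
| "sect_side (a, b, c) (Inf v) = v - a"

definition non_separating :: "sigma2_pt set \<Rightarrow> real \<times> real \<times> real \<Rightarrow> bool" where
  "non_separating B L \<longleftrightarrow> (\<forall>P\<in>B. sect_side L P > 0) \<or> (\<forall>P\<in>B. sect_side L P < 0)"

end

theory Submission
  imports Defs
begin

text \<open>The quantity \<open>sect_side L P\<close> is affine in the section \<open>L\<close>, so the sections lying
strictly below the real curve, resp. strictly above it, form convex sets \<open>S\<^sub>+\<close> and \<open>S\<^sub>-\<close>
whose union is the set of non-separating sections. A real cubic has a real root, so the curve
meets the fiber at infinity and \<open>S\<^sub>+\<close>, \<open>S\<^sub>-\<close> are disjoint. Over \<open>\<bar>x\<bar> \<le> 1\<close>, and in the chart
\<open>u = 1/x\<close>, \<open>v = y/x\<^sup>2\<close> over \<open>\<bar>u\<bar> \<le> 1\<close>, the curve is compact, since the roots of a monic cubic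
are bounded by its coefficients; and the side of a point is its chart expression times the
positive factor \<open>x\<^sup>2\<close>. Hence the sign condition is a strict inequality over a compact set,
which makes \<open>S\<^sub>\<plusminus>\<close> open, and sections far below resp. above the two bounded chart pictures
lie in \<open>S\<^sub>\<plusminus>\<close>. Disjoint, nonempty, open and connected, \<open>S\<^sub>+\<close> and \<open>S\<^sub>-\<close> are the components
of their union.\<close>

lemma cubic_lower_terms_dominated:
  fixes y A B C :: real
  assumes "1 + \<bar>A\<bar> + \<bar>B\<bar> + \<bar>C\<bar> \<le> \<bar>y\<bar>"
  shows "\<bar>A * y^2 + B * y + C\<bar> < \<bar>y\<bar>^3"
proof -
  have y1: "1 \<le> \<bar>y\<bar>" using assms by linarith
  have "\<bar>A * y^2 + B * y + C\<bar> \<le> \<bar>A * y^2\<bar> + \<bar>B * y\<bar> + \<bar>C\<bar>"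
    by (rule order_trans[OF abs_triangle_ineq]) (simp add: abs_triangle_ineq)
  also have "\<dots> = \<bar>A\<bar> * \<bar>y\<bar>^2 + \<bar>B\<bar> * \<bar>y\<bar> + \<bar>C\<bar>"
    by (simp add: abs_mult power_abs)
  also have "\<dots> \<le> (\<bar>A\<bar> + \<bar>B\<bar> + \<bar>C\<bar>) * \<bar>y\<bar>^2"
  proof -
    have "\<bar>y\<bar> \<le> \<bar>y\<bar>^2"
      using mult_left_mono[OF y1, of "\<bar>y\<bar>"] by (simp add: power2_eq_square)
    moreover have "1 \<le> \<bar>y\<bar>^2"
      using y1 by (rule one_le_power)
    ultimately have "\<bar>B\<bar> * \<bar>y\<bar> \<le> \<bar>B\<bar> * \<bar>y\<bar>^2" "\<bar>C\<bar> * 1 \<le> \<bar>C\<bar> * \<bar>y\<bar>^2"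
      by (intro mult_left_mono; simp)+
    then show ?thesis
      by (simp add: distrib_right)
  qed
  also have "\<dots> < \<bar>y\<bar> * \<bar>y\<bar>^2"
    using assms y1 by (intro mult_strict_right_mono) auto
  finally show ?thesis
    by (simp add: power3_eq_cube power2_eq_square mult.assoc)
qed

lemma cubic_root_bound:
  fixes y A B C :: real
  assumes "y^3 + A * y^2 + B * y + C = 0"
  shows "\<bar>y\<bar> < 1 + \<bar>A\<bar> + \<bar>B\<bar> + \<bar>C\<bar>"
proof (rule ccontr)
  assume "\<not> ?thesis"
  then have "\<bar>A * y^2 + B * y + C\<bar> < \<bar>y\<bar>^3"
    by (intro cubic_lower_terms_dominated) simp
  moreover have "\<bar>A * y^2 + B * y + C\<bar> = \<bar>y\<bar>^3"
  proof -
    have "y^3 = - (A * y^2 + B * y + C)" using assms by linarith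
    then show ?thesis by (metis abs_minus_cancel power_abs)
  qed
  ultimately show False by simp
qed

lemma cubic_has_real_root:
  fixes A B C :: real
  shows "\<exists>y. y^3 + A * y^2 + B * y + C = 0"
proof -
  define R where "R = 1 + \<bar>A\<bar> + \<bar>B\<bar> + \<bar>C\<bar>"
  have "R > 0" by (simp add: R_def add_pos_nonneg)
  have lower: "\<bar>A * y^2 + B * y + C\<bar> < R^3" if "\<bar>y\<bar> = R" for y
    using cubic_lower_terms_dominated[of A B C y] that by (simp add: R_def)
  have "(-R)^3 + A * (-R)^2 + B * (-R) + C \<le> 0"
    using lower[of "-R"] \<open>R > 0\<close> by (simp add: power3_eq_cube abs_less_iff)
  moreover have "0 \<le> R^3 + A * R^2 + B * R + C"
    using lower[of R] \<open>R > 0\<close> by (simp add: abs_less_iff)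
  ultimately have "\<exists>y\<ge>-R. y \<le> R \<and> y^3 + A * y^2 + B * y + C = 0"
    using \<open>R > 0\<close> by (intro IVT') (auto intro!: continuous_intros)
  then show ?thesis by blast
qed

lemma open_Collect_forall_compact_pos:
  fixes K :: "'a::euclidean_space set" and h :: "'b::euclidean_space \<Rightarrow> 'a \<Rightarrow> real"
  assumes "compact K" "continuous_on UNIV (\<lambda>w. h (snd w) (fst w))"
  shows "open {L. \<forall>z\<in>K. 0 < h L z}"
proof -
  have "closed {L. \<exists>z. z \<in> K \<and> (z, L) \<in> {w. h (snd w) (fst w) \<le> 0}}"
    using assms by (intro closed_compact_projection closed_Collect_le continuous_on_const)
  also have "{L. \<exists>z. z \<in> K \<and> (z, L) \<in> {w. h (snd w) (fst w) \<le> 0}} = - {L. \<forall>z\<in>K. 0 < h L z}"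
    by (auto simp: not_less)
  finally show ?thesis by (simp add: closed_def)
qed

lemma components_Un_open_connected:
  fixes A B :: "'a::topological_space set"
  assumes "open A" "open B" "connected A" "connected B" "A \<noteq> {}" "B \<noteq> {}" "A \<inter> B = {}"
  shows "components (A \<union> B) = {A, B}"
proof -
  have split: "C \<subseteq> A \<or> C \<subseteq> B" if "connected C" "C \<subseteq> A \<union> B" for C
    using connectedD[OF that(1) assms(1,2)] that(2) assms(7) by auto
  have AB: "X \<in> components (A \<union> B)" if "X \<in> {A, B}" for X
    unfolding in_components_maximal
  proof (intro conjI allI impI)
    show "X \<noteq> {}" "X \<subseteq> A \<union> B" "connected X"
      using that assms by auto
    fix D assume D: "D \<noteq> {} \<and> X \<subseteq> D \<and> D \<subseteq> A \<union> B \<and> connected D"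
    then have "D \<subseteq> A \<or> D \<subseteq> B"
      using split by blast
    then show "D = X"
      using D that assms(5-7) by auto
  qed
  have "C \<in> {A, B}" if C: "C \<in> components (A \<union> B)" for C
  proof -
    have "C \<inter> A \<noteq> {} \<or> C \<inter> B \<noteq> {}"
      using in_components_nonempty[OF C] in_components_subset[OF C] by auto
    then show ?thesis
      using components_eq[OF C AB] by auto
  qed
  with AB show ?thesis by blast
qed

definition cubic_locus ::
    "(real \<Rightarrow> real) \<Rightarrow> (real \<Rightarrow> real) \<Rightarrow> (real \<Rightarrow> real) \<Rightarrow> (real \<times> real) set"
  where "cubic_locus A B C = {(x, y). y^3 + A x * y^2 + B x * y + C x = 0}"

lemma bounded_cubic_locus_strip:
  assumes "continuous_on {-1..1} A" "continuous_on {-1..1} B" "continuous_on {-1..1} C"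
  shows "bounded (cubic_locus A B C \<inter> {-1..1} \<times> UNIV)"
proof -
  have "continuous_on {-1..1} (\<lambda>x. \<bar>A x\<bar> + \<bar>B x\<bar> + \<bar>C x\<bar>)"
    using assms by (intro continuous_intros)
  then have "compact ((\<lambda>x. \<bar>A x\<bar> + \<bar>B x\<bar> + \<bar>C x\<bar>) ` {-1..1})"
    by (rule compact_continuous_image[OF _ compact_Icc])
  then obtain M where M: "\<And>x. x \<in> {-1..1} \<Longrightarrow> \<bar>A x\<bar> + \<bar>B x\<bar> + \<bar>C x\<bar> \<le> M"
    by (fastforce dest: compact_imp_bounded simp: bounded_real)
  have "cubic_locus A B C \<inter> {-1..1} \<times> UNIV \<subseteq> {-1..1} \<times> {-(1 + M)..1 + M}"
  proof clarify
    fix x y :: real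
    assume "(x, y) \<in> cubic_locus A B C" "x \<in> {-1..1}"
    then have "\<bar>y\<bar> < 1 + \<bar>A x\<bar> + \<bar>B x\<bar> + \<bar>C x\<bar>"
      by (intro cubic_root_bound) (auto simp: cubic_locus_def algebra_simps)
    with M[OF \<open>x \<in> {-1..1}\<close>] show "y \<in> {-(1 + M)..1 + M}" by auto
  qed
  then show ?thesis
    by (rule bounded_subset[rotated]) (intro bounded_Times bounded_closed_interval)
qed

lemma closed_cubic_locus:
  assumes "continuous_on UNIV A" "continuous_on UNIV B" "continuous_on UNIV C"
  shows "closed (cubic_locus A B C)"
proof -
  have "cubic_locus A B C = {z. snd z^3 + A (fst z) * snd z^2 + B (fst z) * snd z + C (fst z) = 0}"
    by (auto simp: cubic_locus_def)
  also have "closed \<dots>"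
  proof -
    have fst: "continuous_on UNIV (\<lambda>z. F (fst z :: real))"
      if "continuous_on UNIV F" for F :: "real \<Rightarrow> real"
      using continuous_on_compose2[OF that continuous_on_fst[OF continuous_on_id]] by simp
    show ?thesis
      using fst[OF assms(1)] fst[OF assms(2)] fst[OF assms(3)]
      by (intro closed_Collect_eq continuous_intros) auto
  qed
  finally show ?thesis .
qed

lemma compact_cubic_locus_strip:
  assumes "continuous_on UNIV A" "continuous_on UNIV B" "continuous_on UNIV C"
  shows "compact (cubic_locus A B C \<inter> {-1..1} \<times> UNIV)"
proof (subst compact_eq_bounded_closed, intro conjI)
  show "bounded (cubic_locus A B C \<inter> {-1..1} \<times> UNIV)"
    using assms[THEN continuous_on_subset, OF subset_UNIV] by (rule bounded_cubic_locus_strip)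
  show "closed (cubic_locus A B C \<inter> {-1..1} \<times> UNIV)"
    using assms by (intro closed_Int closed_cubic_locus closed_Times) auto
qed

text \<open>The coefficients of the curve in the chart \<open>u = 1/x\<close>, \<open>v = y/x\<^sup>2\<close>: the polynomial \<open>p\<close> of
formal degree \<open>n\<close> becomes \<open>u\<^sup>n p(1/u)\<close>, which stays meaningful at \<open>u = 0\<close>.\<close>

definition poly_at_infinity :: "nat \<Rightarrow> real poly \<Rightarrow> real \<Rightarrow> real"
  where "poly_at_infinity n p u = (\<Sum>i\<le>n. coeff p i * u^(n - i))"

lemma continuous_on_poly_at_infinity: "continuous_on S (poly_at_infinity n p)"
  unfolding poly_at_infinity_def by (intro continuous_intros)

lemma poly_at_infinity_0: "poly_at_infinity n p 0 = coeff p n"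
proof -
  have "poly_at_infinity n p 0 = (\<Sum>i\<le>n. if i = n then coeff p i else 0)"
    unfolding poly_at_infinity_def by (rule sum.cong) (auto simp: power_0_left)
  then show ?thesis by simp
qed

lemma poly_at_infinity_inverse:
  assumes "degree p \<le> n" "x \<noteq> 0"
  shows "poly_at_infinity n p (1/x) = poly p x / x^n"
proof -
  have "poly p x = (\<Sum>i\<le>n. coeff p i * x^i)"
    unfolding poly_altdef using assms(1)
    by (intro sum.mono_neutral_left) (auto simp: coeff_eq_0)
  also have "\<dots> = poly_at_infinity n p (1/x) * x^n"
    unfolding poly_at_infinity_def sum_distrib_right
  proof (rule sum.cong[OF refl])
    fix i assume "i \<in> {..n}"
    then have "x^n = x^(n - i) * x^i" by (simp flip: power_add)
    then show "coeff p i * x^i = coeff p i * (1/x)^(n - i) * x^n"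
      using assms(2) by (simp add: power_one_over field_simps)
  qed
  finally show ?thesis using assms(2) by simp
qed

abbreviation affine_curve :: "real poly \<Rightarrow> real poly \<Rightarrow> real poly \<Rightarrow> (real \<times> real) set"
  where "affine_curve p2 p4 p6 \<equiv> cubic_locus (poly p2) (poly p4) (poly p6)"

abbreviation curve_at_infinity :: "real poly \<Rightarrow> real poly \<Rightarrow> real poly \<Rightarrow> (real \<times> real) set"
  where "curve_at_infinity p2 p4 p6 \<equiv>
    cubic_locus (poly_at_infinity 2 p2) (poly_at_infinity 4 p4) (poly_at_infinity 6 p6)"

lemma Aff_in_trig_real_pts:
  "Aff x y \<in> trig_real_pts p2 p4 p6 \<longleftrightarrow> (x, y) \<in> affine_curve p2 p4 p6"
  by (auto simp: trig_real_pts_def cubic_locus_def algebra_simps)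

lemma Inf_in_trig_real_pts:
  "Inf v \<in> trig_real_pts p2 p4 p6 \<longleftrightarrow> (0, v) \<in> curve_at_infinity p2 p4 p6"
  by (auto simp: trig_real_pts_def cubic_locus_def poly_at_infinity_0 algebra_simps)

lemma ex_Inf_in_trig_real_pts: "\<exists>v. Inf v \<in> trig_real_pts p2 p4 p6"
  using cubic_has_real_root[of "coeff p2 2" "coeff p4 4" "coeff p6 6"]
  by (auto simp: trig_real_pts_def algebra_simps)

lemma Aff_in_trig_real_pts_chart:
  assumes "proper_trigonal p2 p4 p6" "x \<noteq> 0"
  shows "Aff x y \<in> trig_real_pts p2 p4 p6 \<longleftrightarrow> (1/x, y/x^2) \<in> curve_at_infinity p2 p4 p6"
proof -
  have "(y/x^2)^3 + poly_at_infinity 2 p2 (1/x) * (y/x^2)^2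
          + poly_at_infinity 4 p4 (1/x) * (y/x^2) + poly_at_infinity 6 p6 (1/x)
        = (y^3 + poly p2 x * y^2 + poly p4 x * y + poly p6 x) / x^6"
    using assms unfolding proper_trigonal_def
    by (simp add: poly_at_infinity_inverse field_simps power2_eq_square power3_eq_cube
        eval_nat_numeral)
  then show ?thesis
    using assms(2) by (simp add: Aff_in_trig_real_pts cubic_locus_def)
qed

definition side_affine :: "real \<times> real \<times> real \<Rightarrow> real \<times> real \<Rightarrow> real"
  where "side_affine L z = snd z - (fst L * fst z^2 + fst (snd L) * fst z + snd (snd L))"

definition side_at_infinity :: "real \<times> real \<times> real \<Rightarrow> real \<times> real \<Rightarrow> real"
  where "side_at_infinity L z = snd z - (fst L + fst (snd L) * fst z + snd (snd L) * fst z^2)"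

lemma sect_side_Aff: "sect_side L (Aff x y) = side_affine L (x, y)"
  by (cases L) (simp add: side_affine_def)

lemma sect_side_Inf: "sect_side L (Inf v) = side_at_infinity L (0, v)"
  by (cases L) (simp add: side_at_infinity_def)

lemma sect_side_Aff_chart:
  assumes "x \<noteq> 0"
  shows "sect_side L (Aff x y) = x^2 * side_at_infinity L (1/x, y/x^2)"
  using assms by (cases L) (simp add: side_at_infinity_def field_simps power2_eq_square)

lemma continuous_on_side_affine [continuous_intros]:
  "continuous_on S f \<Longrightarrow> continuous_on S g \<Longrightarrow> continuous_on S (\<lambda>w. side_affine (f w) (g w))"
  unfolding side_affine_def by (intro continuous_intros)

lemma continuous_on_side_at_infinity [continuous_intros]:
  "continuous_on S f \<Longrightarrow> continuous_on S g \<Longrightarrow> continuous_on S (\<lambda>w. side_at_infinity (f w) (g w))"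
  unfolding side_at_infinity_def by (intro continuous_intros)

definition side_sections :: "sigma2_pt set \<Rightarrow> real \<Rightarrow> (real \<times> real \<times> real) set"
  where "side_sections B s = {L. \<forall>P\<in>B. 0 < s * sect_side L P}"

lemma non_separating_iff_side_sections:
  "non_separating B L \<longleftrightarrow> L \<in> side_sections B 1 \<union> side_sections B (-1)"
  by (auto simp: non_separating_def side_sections_def)

lemma convex_side_sections: "convex (side_sections B s)"
proof (rule convexI)
  fix L1 L2 :: "real \<times> real \<times> real" and u v :: real
  assume L: "L1 \<in> side_sections B s" "L2 \<in> side_sections B s"
    and uv: "0 \<le> u" "0 \<le> v" "u + v = 1"
  have affine: "sect_side (u *\<^sub>R L1 + v *\<^sub>R L2) P = u * sect_side L1 P + v * sect_side L2 P" for P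
    using uv(3) by (cases L1, cases L2, cases P) (auto simp: algebra_simps simp flip: distrib_left)
  show "u *\<^sub>R L1 + v *\<^sub>R L2 \<in> side_sections B s"
    unfolding side_sections_def
  proof (intro CollectI ballI)
    fix P assume "P \<in> B"
    then have "0 < s * sect_side L1 P" "0 < s * sect_side L2 P"
      using L by (auto simp: side_sections_def)
    then have "0 < u * (s * sect_side L1 P) + v * (s * sect_side L2 P)"
      using uv by (cases "u = 0") (auto intro: add_pos_nonneg)
    then show "0 < s * sect_side (u *\<^sub>R L1 + v *\<^sub>R L2) P"
      by (simp add: affine algebra_simps)
  qed
qed

lemma side_sections_disjoint:
  assumes "B \<noteq> {}"
  shows "side_sections B 1 \<inter> side_sections B (-1) = {}"
  using assms by (force simp: side_sections_def)

lemma side_sections_charts: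
  assumes "proper_trigonal p2 p4 p6"
  shows "side_sections (trig_real_pts p2 p4 p6) s =
    {L. \<forall>z\<in>affine_curve p2 p4 p6 \<inter> {-1..1} \<times> UNIV. 0 < s * side_affine L z} \<inter>
    {L. \<forall>z\<in>curve_at_infinity p2 p4 p6 \<inter> {-1..1} \<times> UNIV. 0 < s * side_at_infinity L z}"
    (is "?S = ?A \<inter> ?I")
proof (intro set_eqI iffI)
  have rescale: "0 < s * sect_side L (Aff x y) \<longleftrightarrow> 0 < s * side_at_infinity L (1/x, y/x^2)"
    if "x \<noteq> 0" for L x y
    using that by (simp add: sect_side_Aff_chart zero_less_mult_iff mult.left_commute[of s])
  fix L
  show "L \<in> ?A \<inter> ?I" if L: "L \<in> ?S"
  proof (intro IntI CollectI ballI)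
    fix z assume z: "z \<in> affine_curve p2 p4 p6 \<inter> {-1..1} \<times> UNIV"
    obtain x y where xy: "z = (x, y)" by (cases z)
    have "Aff x y \<in> trig_real_pts p2 p4 p6"
      using z by (simp add: xy Aff_in_trig_real_pts)
    then show "0 < s * side_affine L z"
      using L by (simp add: xy side_sections_def flip: sect_side_Aff)
  next
    fix z assume z: "z \<in> curve_at_infinity p2 p4 p6 \<inter> {-1..1} \<times> UNIV"
    obtain u v where uv: "z = (u, v)" by (cases z)
    show "0 < s * side_at_infinity L z"
    proof (cases "u = 0")
      case True
      then have "Inf v \<in> trig_real_pts p2 p4 p6"
        using z by (simp add: uv Inf_in_trig_real_pts)
      then show ?thesis
        using L True by (simp add: uv side_sections_def flip: sect_side_Inf)
    next
      case False
      then have "Aff (1/u) (v / u^2) \<in> trig_real_pts p2 p4 p6"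
        using z by (simp add: uv Aff_in_trig_real_pts_chart[OF assms] power_one_over)
      then show ?thesis
        using L rescale[of "1/u" L "v / u^2"] False
        by (auto simp: uv side_sections_def power_one_over)
    qed
  qed
  show "L \<in> ?S" if L: "L \<in> ?A \<inter> ?I"
    unfolding side_sections_def
  proof (intro CollectI ballI)
    fix P assume P: "P \<in> trig_real_pts p2 p4 p6"
    show "0 < s * sect_side L P"
    proof (cases P)
      case (Aff x y)
      show ?thesis
      proof (cases "\<bar>x\<bar> \<le> 1")
        case True
        then have "(x, y) \<in> affine_curve p2 p4 p6 \<inter> {-1..1} \<times> UNIV"
          using P by (auto simp: Aff Aff_in_trig_real_pts)
        then show ?thesis
          using L by (auto simp: Aff sect_side_Aff)
      next
        case False
        then have "1/x \<in> {-1..1}" by (cases "x > 0") (auto simp: field_simps)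
        then have "(1/x, y/x^2) \<in> curve_at_infinity p2 p4 p6 \<inter> {-1..1} \<times> UNIV"
          using P False Aff_in_trig_real_pts_chart[OF assms] by (auto simp: Aff)
        then show ?thesis
          using L rescale[of x L y] False by (auto simp: Aff)
      qed
    next
      case (Inf v)
      then have "(0, v) \<in> curve_at_infinity p2 p4 p6 \<inter> {-1..1} \<times> UNIV"
        using P by (simp add: Inf_in_trig_real_pts)
      then show ?thesis
        using L by (auto simp: Inf sect_side_Inf)
    qed
  qed
qed

lemma open_side_sections:
  assumes "proper_trigonal p2 p4 p6"
  shows "open (side_sections (trig_real_pts p2 p4 p6) s)"
  unfolding side_sections_charts[OF assms]
  by (intro open_Int open_Collect_forall_compact_pos compact_cubic_locus_strip
      continuous_on_poly_at_infinity continuous_intros)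

lemma side_sections_nonempty:
  assumes "proper_trigonal p2 p4 p6" "s \<in> {1, -1}"
  shows "side_sections (trig_real_pts p2 p4 p6) s \<noteq> {}"
proof -
  let ?K = "affine_curve p2 p4 p6 \<inter> {-1..1} \<times> UNIV
            \<union> curve_at_infinity p2 p4 p6 \<inter> {-1..1} \<times> UNIV"
  have "bounded ?K"
    unfolding bounded_Un
    by (intro conjI compact_imp_bounded compact_cubic_locus_strip
        continuous_on_poly_at_infinity continuous_intros)
  then obtain R where R: "\<forall>z\<in>?K. norm z \<le> R"
    by (auto simp: bounded_iff)
  have above: "0 < s * y + (R + 1) * t" if "(x, y) \<in> ?K" "1 \<le> t" for x y t
  proof -
    have "norm (x, y) \<le> R"
      using R that(1) by blast
    then have "\<bar>y\<bar> \<le> R"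
      using norm_snd_le[of y x] by simp
    moreover have "R + 1 \<le> (R + 1) * t"
      using mult_left_mono[OF that(2), of "R + 1"] \<open>\<bar>y\<bar> \<le> R\<close> by simp
    ultimately show ?thesis
      using assms(2) by auto
  qed
  define c where "c = - s * (R + 1)"
  have "(c, 0, c) \<in> side_sections (trig_real_pts p2 p4 p6) s"
    unfolding side_sections_charts[OF assms(1)]
  proof (intro IntI CollectI ballI)
    fix z assume z: "z \<in> affine_curve p2 p4 p6 \<inter> {-1..1} \<times> UNIV"
    obtain x y where xy: "z = (x, y)" by (cases z)
    have "s * side_affine (c, 0, c) z = s * y + (R + 1) * (x^2 + 1)"
      using assms(2) by (auto simp: xy side_affine_def c_def algebra_simps)
    then show "0 < s * side_affine (c, 0, c) z"
      using above[of x y "x^2 + 1"] z by (simp add: xy)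
  next
    fix z assume z: "z \<in> curve_at_infinity p2 p4 p6 \<inter> {-1..1} \<times> UNIV"
    obtain u v where uv: "z = (u, v)" by (cases z)
    have "s * side_at_infinity (c, 0, c) z = s * v + (R + 1) * (1 + u^2)"
      using assms(2) by (auto simp: uv side_at_infinity_def c_def algebra_simps)
    then show "0 < s * side_at_infinity (c, 0, c) z"
      using above[of u v "1 + u^2"] z by (simp add: uv)
  qed
  then show ?thesis by blast
qed

theorem lemmaA1:
  fixes p2 p4 p6 :: "real poly"
  assumes "proper_trigonal p2 p4 p6"
  shows "\<exists>Sp Sm. components {L. non_separating (trig_real_pts p2 p4 p6) L} = {Sp, Sm}
           \<and> Sp \<noteq> Sm \<and> Sp \<noteq> {} \<and> Sm \<noteq> {}
           \<and> open Sp \<and> open Sm \<and> convex Sp \<and> convex Sm"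
proof -
  let ?T = "trig_real_pts p2 p4 p6"
  let ?Sp = "side_sections ?T 1" and ?Sm = "side_sections ?T (-1)"
  have "?T \<noteq> {}"
    using ex_Inf_in_trig_real_pts by blast
  then have disjoint: "?Sp \<inter> ?Sm = {}"
    by (rule side_sections_disjoint)
  have nonempty: "?Sp \<noteq> {}" "?Sm \<noteq> {}"
    by (rule side_sections_nonempty[OF assms]; simp)+
  have "{L. non_separating ?T L} = ?Sp \<union> ?Sm"
    by (auto simp: non_separating_iff_side_sections)
  also have "components \<dots> = {?Sp, ?Sm}"
    using assms disjoint nonempty
    by (intro components_Un_open_connected open_side_sections convex_connected convex_side_sections)
  finally have "components {L. non_separating ?T L} = {?Sp, ?Sm}" .
  moreover have "?Sp \<noteq> ?Sm"
    using disjoint nonempty by blast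
  ultimately show ?thesis
    using nonempty open_side_sections[OF assms] convex_side_sections
    by (intro exI[of _ ?Sp] exI[of _ ?Sm]) simp
qed

end
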